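(* Let $0<\alpha<1$, $\lambda \in \mathbb{R}$, $n \geq 1$, and let $E:\mathbb{R}^n \to \mathbb{R}$ be a differentiable error function. Define \[ E_{\ell_1}(x) = E(x) + \lambda \sum_{k=1}^{n} |x_k|, \qquad x=(x_1,\dots,x_n). \] Fix $j \in \{1,\dots,n\}$ and the coordinates $x_k$, $k\neq j$, and regard $E$ and $E_{\ell_1}$ as functions of the single variable $x_j$. Then for $a>0$ and $x_j>a$, \[ {^{\sigma}}D^{\alpha}_{a} E_{\ell_1}(x_j) = {^{\sigma}}D^{\alpha}_{a} E(x_j) + \lambda C_1(\alpha)(\alpha-1)\tanh\Big(\frac{a-x_j}{1-\alpha}\Big). \]
   Context: Let $C:(0,1]\to\mathbb{R}$ be a normalization function satisfying $C(\alpha)\Gamma(1-\alpha) \to \tfrac12$ as $\alpha \to 1^{-}$, and set $C_1(\alpha) = \frac{C(\alpha)}{\Gamma(2-\alpha)}$. For $0<\alpha<1$, a (weakly) differentiable function $f$ of one variable with derivative $f'$, and $t>a$, the left sigmoidal fractional derivative is \[ {^{\sigma}}D^{\alpha}_{a} f(t) = C_1(\alpha) \int_{a}^{t} f'(s)\, \operatorname{sech}^2\!\Big(\frac{s-t}{1-\alpha}\Big)\, ds. \] *)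

theory Defs
  imports "HOL-Analysis.Analysis"
begin

definition sech :: "real \<Rightarrow> real" where
  "sech x = 1 / cosh x"

definition C1 :: "(real \<Rightarrow> real) \<Rightarrow> real \<Rightarrow> real" where
  "C1 C \<alpha> = C \<alpha> / Gamma (2 - \<alpha>)"

definition sigmoidal_frac_deriv ::
  "(real \<Rightarrow> real) \<Rightarrow> real \<Rightarrow> real \<Rightarrow> (real \<Rightarrow> real) \<Rightarrow> real \<Rightarrow> real" where
  "sigmoidal_frac_deriv C \<alpha> a f t =
     C1 C \<alpha> * integral {a..t} (\<lambda>s. deriv f s * (sech ((s - t) / (1 - \<alpha>)))^2)"

definition coord_upd :: "real^'n \<Rightarrow> 'n \<Rightarrow> real \<Rightarrow> real^'n" where
  "coord_upd x j u = (\<chi> k. if k = j then u else x $ k)"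

definition E_l1 :: "real \<Rightarrow> (real^'n \<Rightarrow> real) \<Rightarrow> real^'n \<Rightarrow> real" where
  "E_l1 lam E y = E y + lam * (\<Sum>k\<in>UNIV. \<bar>y $ k\<bar>)"

end

theory Submission
  imports Defs
begin

text \<open>On \<open>[a, x\<^sub>j] \<subseteq> (0, \<infinity>)\<close> the penalty \<open>\<lambda> |u|\<close> is affine with slope \<open>\<lambda>\<close>,
  so the integrand of the sigmoidal derivative of \<open>E\<^sub>\<ell>\<^sub>1\<close> is that of \<open>E\<close> plus
  \<open>\<lambda> sech\<^sup>2((s - x\<^sub>j)/(1 - \<alpha>))\<close>, whose integral over \<open>[a, x\<^sub>j]\<close> is
  \<open>(\<alpha> - 1) tanh((a - x\<^sub>j)/(1 - \<alpha>))\<close> because \<open>tanh' = sech\<^sup>2\<close>.\<close>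

lemma coord_upd_eq_axis: "coord_upd x j u = x + (u - x $ j) *\<^sub>R axis j 1"
  by (simp add: coord_upd_def vec_eq_iff axis_def)

lemma differentiable_coord_upd: "(\<lambda>u. coord_upd x j u) differentiable (at s)"
  unfolding coord_upd_eq_axis by (intro derivative_intros)

lemma sum_abs_coord_upd:
  "(\<Sum>k\<in>UNIV. \<bar>coord_upd x j u $ k\<bar>) = \<bar>u\<bar> + (\<Sum>k\<in>UNIV - {j}. \<bar>x $ k\<bar>)"
proof -
  have "(\<Sum>k\<in>UNIV. \<bar>coord_upd x j u $ k\<bar>)
      = \<bar>coord_upd x j u $ j\<bar> + (\<Sum>k\<in>UNIV - {j}. \<bar>coord_upd x j u $ k\<bar>)"
    by (rule sum.remove) auto
  also have "(\<Sum>k\<in>UNIV - {j}. \<bar>coord_upd x j u $ k\<bar>) = (\<Sum>k\<in>UNIV - {j}. \<bar>x $ k\<bar>)"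
    by (rule sum.cong) (auto simp: coord_upd_def)
  finally show ?thesis by (simp add: coord_upd_def)
qed

lemma deriv_add_abs_affine:
  fixes f :: "real \<Rightarrow> real"
  assumes "f differentiable (at s)" and "s > 0"
  shows "deriv (\<lambda>u. f u + lam * (\<bar>u\<bar> + c)) s = deriv f s + lam"
proof -
  have "((\<lambda>u. lam * (u + c)) has_real_derivative lam) (at s)"
    by (auto intro!: derivative_eq_intros)
  then have "((\<lambda>u. lam * (\<bar>u\<bar> + c)) has_real_derivative lam) (at s)"
    by (rule has_field_derivative_transform_within_open[of _ _ _ "{0<..}"]) (use assms in auto)
  moreover have "(f has_real_derivative deriv f s) (at s)"
    using assms(1) by (simp add: DERIV_deriv_iff_real_differentiable)
  ultimately show ?thesis
    by (intro DERIV_imp_deriv DERIV_add)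
qed

lemma has_real_derivative_scaled_tanh:
  fixes c :: real
  assumes "c \<noteq> 0"
  shows "((\<lambda>s. c * tanh ((s - t) / c)) has_real_derivative (sech ((s - t) / c))^2) (at s within S)"
proof -
  define z where "z = (s - t) / c"
  have cosh_nz: "cosh z \<noteq> 0"
    by (metis cosh_real_pos less_irrefl)
  have "((\<lambda>s. c * tanh ((s - t) / c)) has_real_derivative
          c * ((1 - tanh z ^ 2) * (1 / c))) (at s within S)"
    unfolding z_def using cosh_nz[unfolded z_def] by (auto intro!: derivative_eq_intros)
  moreover have "1 - tanh z ^ 2 = (sech z)^2"
  proof -
    have "1 - tanh z ^ 2 = (cosh z ^ 2 - sinh z ^ 2) / cosh z ^ 2"
      using cosh_nz by (simp add: tanh_def field_simps)
    then show ?thesis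
      by (simp add: cosh_square_eq sech_def power_divide)
  qed
  ultimately show ?thesis
    using assms by (simp add: z_def)
qed

lemma sech_square_has_integral:
  fixes c :: real
  assumes "c \<noteq> 0" and "a \<le> b"
  shows "((\<lambda>s. (sech ((s - t) / c))^2)
           has_integral c * tanh ((b - t) / c) - c * tanh ((a - t) / c)) {a..b}"
  using assms has_real_derivative_scaled_tanh[OF assms(1)]
  by (intro fundamental_theorem_of_calculus)
     (auto simp: has_real_derivative_iff_has_vector_derivative[symmetric])

lemma sigmoidal_frac_deriv_add_slope:
  assumes "\<alpha> < 1" and "a \<le> t"
    and deriv_f: "\<And>s. s \<in> {a..t} \<Longrightarrow> deriv f s = deriv g s + lam"
    and g_int: "(\<lambda>s. deriv g s * (sech ((s - t) / (1 - \<alpha>)))^2) integrable_on {a..t}"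
  shows "sigmoidal_frac_deriv C \<alpha> a f t
       = sigmoidal_frac_deriv C \<alpha> a g t + lam * C1 C \<alpha> * (\<alpha> - 1) * tanh ((a - t) / (1 - \<alpha>))"
proof -
  define w where "w = (\<lambda>s. (sech ((s - t) / (1 - \<alpha>)))^2)"
  have "(w has_integral (\<alpha> - 1) * tanh ((a - t) / (1 - \<alpha>))) {a..t}"
    using sech_square_has_integral[of "1 - \<alpha>" a t t] assms(1,2)
    by (simp add: w_def algebra_simps)
  then have "((\<lambda>s. deriv g s * w s + lam * w s) has_integral
        integral {a..t} (\<lambda>s. deriv g s * w s) + lam * ((\<alpha> - 1) * tanh ((a - t) / (1 - \<alpha>)))) {a..t}"
    using g_int by (intro has_integral_add has_integral_mult_right integrable_integral)
      (simp_all add: w_def)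
  moreover have "integral {a..t} (\<lambda>s. deriv f s * w s)
      = integral {a..t} (\<lambda>s. deriv g s * w s + lam * w s)"
    by (rule integral_cong) (simp add: deriv_f algebra_simps)
  ultimately have int_f: "integral {a..t} (\<lambda>s. deriv f s * w s)
      = integral {a..t} (\<lambda>s. deriv g s * w s) + lam * ((\<alpha> - 1) * tanh ((a - t) / (1 - \<alpha>)))"
    using integral_unique by metis
  show ?thesis
    unfolding sigmoidal_frac_deriv_def int_f[unfolded w_def] by (simp add: algebra_simps)
qed

theorem theorem2p4:
  fixes C :: "real \<Rightarrow> real" and \<alpha> lam a :: real
    and E :: "real^'n \<Rightarrow> real" and x :: "real^'n" and j :: 'n
  assumes C_norm: "((\<lambda>\<beta>. C \<beta> * Gamma (1 - \<beta>)) \<longlongrightarrow> 1/2) (at_left 1)"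
    and "0 < \<alpha>" and "\<alpha> < 1"
    and E_diff: "\<forall>y. E differentiable (at y)"
    and "a > 0" and "x $ j > a"
    and E_int: "(\<lambda>s. deriv (\<lambda>u. E (coord_upd x j u)) s
                   * (sech ((s - x $ j) / (1 - \<alpha>)))^2) integrable_on {a..x $ j}"
  shows "sigmoidal_frac_deriv C \<alpha> a (\<lambda>u. E_l1 lam E (coord_upd x j u)) (x $ j)
       = sigmoidal_frac_deriv C \<alpha> a (\<lambda>u. E (coord_upd x j u)) (x $ j)
         + lam * C1 C \<alpha> * (\<alpha> - 1) * tanh ((a - x $ j) / (1 - \<alpha>))"
proof (rule sigmoidal_frac_deriv_add_slope[OF \<open>\<alpha> < 1\<close> _ _ E_int])
  show "a \<le> x $ j"
    using \<open>x $ j > a\<close> by simp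
  fix s assume "s \<in> {a..x $ j}"
  then have "s > 0"
    using \<open>a > 0\<close> by simp
  have "(\<lambda>u. E (coord_upd x j u)) differentiable (at s)"
    using differentiable_chain_at[OF differentiable_coord_upd, of E] E_diff
    by (simp add: comp_def)
  then show "deriv (\<lambda>u. E_l1 lam E (coord_upd x j u)) s
      = deriv (\<lambda>u. E (coord_upd x j u)) s + lam"
    using deriv_add_abs_affine[OF _ \<open>s > 0\<close>]
    by (simp add: E_l1_def sum_abs_coord_upd)
qed

end
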